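(* Let $\mathbf{F}$ be a field of characteristic $3$, let $\lambda=(\lambda_1,\lambda_2)$ be a partition with $m=\lambda_1-\lambda_2$, and let $t\in\mathbf{N}$. Then in $S_\mathbf{F}(\lambda)$, \[\psi_{m,t}=\psi_{m,t-1}\Big[\tbinom{m_{t-1}}{2}+\tbinom{m_{t-1}}{1}b(3^{t-1})+\tbinom{m_{t-1}}{0}b(2\cdot3^{t-1})\Big]+\tbinom{m_{t-1}}{2}b(3^{t-1})+\tbinom{m_{t-1}}{1}b(2\cdot3^{t-1}),\] where $m_{t-1}$ is the $(t-1)$-th base-3 digit of $m$.
   Context: $S_\mathbf{F}(\lambda)=\operatorname{End}_{\mathbf{F}S_r}(M^\lambda)$ is a commutative $\mathbf{F}$-algebra with basis $b(0)=\mathbf{1},\dots,b(\lambda_2)$ and multiplication $b(i)b(j)=\sum_{h=\max\{i,j\}}^{i+j}\binom{h}{i}\binom{h}{j}\binom{m+i+j}{i+j-h}b(h)$, $b(a)=0$ for $a>\lambda_2$. For $m=\sum_u m_u3^u$ in base 3, $m_{<u}=\sum_{s<u}m_s3^s$ and $\psi_{m,u}=\sum_{k=1}^{3^u-1}\binom{m_{<u}}{3^u-k}b(k)$ (so $\psi_{m,0}=0$). *)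

theory Defs
  imports Main
begin

text \<open>Elements of the algebra S_F(lambda) are represented by their coefficient
  vectors with respect to the basis b(0),...,b(lambda_2): functions nat => F
  which vanish beyond lambda_2. The parameters are m = lambda_1 - lambda_2 and
  l2 = lambda_2.\<close>

definition bas :: "nat \<Rightarrow> nat \<Rightarrow> 'a::field \<Rightarrow> nat \<Rightarrow> 'a" where
  "bas l2 k c = (\<lambda>h. if h = k \<and> k \<le> l2 then c else 0)"

abbreviation b :: "nat \<Rightarrow> nat \<Rightarrow> nat \<Rightarrow> 'a::field" where
  "b l2 k \<equiv> bas l2 k 1"

definition vadd :: "(nat \<Rightarrow> 'a::field) \<Rightarrow> (nat \<Rightarrow> 'a) \<Rightarrow> nat \<Rightarrow> 'a" where
  "vadd x y = (\<lambda>h. x h + y h)"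

definition vsmul :: "'a::field \<Rightarrow> (nat \<Rightarrow> 'a) \<Rightarrow> nat \<Rightarrow> 'a" where
  "vsmul c x = (\<lambda>h. c * x h)"

text \<open>Structure constant: coefficient of b(h) in b(i) b(j).\<close>
definition sc :: "nat \<Rightarrow> nat \<Rightarrow> nat \<Rightarrow> nat \<Rightarrow> 'a::field" where
  "sc m i j h = (if max i j \<le> h \<and> h \<le> i + j
      then of_nat ((h choose i) * (h choose j) * ((m + i + j) choose (i + j - h))) else 0)"

definition smult :: "nat \<Rightarrow> nat \<Rightarrow> (nat \<Rightarrow> 'a::field) \<Rightarrow> (nat \<Rightarrow> 'a) \<Rightarrow> nat \<Rightarrow> 'a" where
  "smult m l2 x y = (\<lambda>h. if h \<le> l2
      then (\<Sum>i\<le>l2. \<Sum>j\<le>l2. x i * y j * sc m i j h) else 0)"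

definition digit3 :: "nat \<Rightarrow> nat \<Rightarrow> nat" where
  "digit3 m u = m div 3 ^ u mod 3"

definition trunc3 :: "nat \<Rightarrow> nat \<Rightarrow> nat" where
  "trunc3 m u = m mod 3 ^ u"

definition psi :: "nat \<Rightarrow> nat \<Rightarrow> nat \<Rightarrow> nat \<Rightarrow> 'a::field" where
  "psi l2 m u = (\<lambda>h. \<Sum>k\<in>{1..3 ^ u - 1}. of_nat (trunc3 m u choose (3 ^ u - k)) * b l2 k h)"

end

theory Submission
  imports Defs "HOL-Computational_Algebra.Polynomial" "HOL-Computational_Algebra.Primes"
begin

text \<open>Put \<open>N = 3^(t-1)\<close>, so that \<open>m\<^sub><\<^sub>t = m\<^sub>t\<^sub>-\<^sub>1 N + m\<^sub><\<^sub>t\<^sub>-\<^sub>1\<close>.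
  In characteristic \<open>p\<close> the identity \<open>(1 + X)^N = 1 + X^N\<close> for \<open>N = p^s\<close> gives the
  digitwise factorisation of Lucas' theorem, \<open>C(d N + r, a N + c) = C(d, a) C(r, c)\<close> for \<open>r, c < N\<close>.
  Applied to the structure constants, it shows that \<open>b(i) b(a N) = b(a N + i)\<close> for
  \<open>i < N\<close>, so multiplying \<open>\<psi>\<^sub>m\<^sub>,\<^sub>t\<^sub>-\<^sub>1\<close>, which is supported below \<open>N\<close>,
  by \<open>b(a N)\<close> merely shifts it by \<open>a N\<close>. Applied to the coefficients of \<open>\<psi>\<^sub>m\<^sub>,\<^sub>t\<close>,
  it shows that the coefficient of \<open>b(j N + k)\<close>, \<open>1 \<le> k \<le> N\<close>, equals
  \<open>C(m\<^sub>t\<^sub>-\<^sub>1, 2 - j) C(m\<^sub><\<^sub>t\<^sub>-\<^sub>1, N - k)\<close>; comparing coefficients block by block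
  gives the recursion.\<close>

hide_const (open) Polynomial.smult

lemma power_monom_plus_one:
  "(monom 1 N + 1 :: 'a::comm_semiring_1 poly) ^ n = (\<Sum>k\<le>n. monom (of_nat (n choose k)) (N * k))"
  by (simp add: binomial_ring monom_power of_nat_poly mult_monom flip: monom_0)

lemma coeff_monom_plus_one_power:
  "coeff ((monom 1 1 + 1 :: 'a::comm_semiring_1 poly) ^ n) j = of_nat (n choose j)"
  by (simp add: power_monom_plus_one coeff_sum binomial_eq_0)

lemma of_nat_binomial_digit_split:
  assumes char: "prime CHAR('a::comm_ring_1)" and N: "N = CHAR('a) ^ s"
    and "r < N" and "c < N"
  shows "(of_nat ((d * N + r) choose (a * N + c)) :: 'a) = of_nat (d choose a) * of_nat (r choose c)"
proof -
  let ?P = "monom 1 1 + 1 :: 'a poly"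
  have "?P ^ N = monom 1 N + 1"
    using freshmans_dream'[where 'a = "'a poly", of N s "monom 1 1" 1] char N
    by (simp add: monom_power)
  then have "?P ^ (d * N + r) = (\<Sum>i\<le>d. monom (of_nat (d choose i)) (N * i) * ?P ^ r)"
    by (simp add: power_add power_mult mult.commute[of d] power_monom_plus_one sum_distrib_right)
  then have "coeff (?P ^ (d * N + r)) (a * N + c) = (\<Sum>i\<le>d. if a * N + c < N * i then 0
      else of_nat (d choose i) * of_nat (r choose (a * N + c - N * i)))"
    by (simp only: coeff_sum coeff_monom_mult coeff_monom_plus_one_power)
  also have "\<dots> = (\<Sum>i\<le>d. if i = a then of_nat (d choose a) * of_nat (r choose c) else 0)"
  proof (rule sum.cong[OF refl])
    fix i
    have "r < a * N + c - N * i" if "i < a"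
    proof -
      have "N * (i + 1) \<le> N * a" using that by (intro mult_le_mono2) simp
      then show ?thesis using \<open>r < N\<close> by (simp add: algebra_simps)
    qed
    moreover have "a * N + c < N * i" if "a < i"
    proof -
      have "N * (a + 1) \<le> N * i" using that by (intro mult_le_mono2) simp
      then show ?thesis using \<open>c < N\<close> by (simp add: algebra_simps)
    qed
    ultimately show "(if a * N + c < N * i then 0
        else of_nat (d choose i) * of_nat (r choose (a * N + c - N * i)) :: 'a)
      = (if i = a then of_nat (d choose a) * of_nat (r choose c) else 0)"
      by (cases i a rule: linorder_cases) (auto simp: binomial_eq_0 mult.commute)
  qed
  also have "\<dots> = of_nat (d choose a) * of_nat (r choose c)"
    by (auto simp: binomial_eq_0)
  finally show ?thesis
    by (simp only: coeff_monom_plus_one_power)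
qed

lemma sc_block_multiple:
  assumes char: "prime CHAR('a::field)" and N: "N = CHAR('a) ^ s" and "i < N"
  shows "(sc m i (a * N) h :: 'a) = (if h = a * N + i then 1 else 0)"
proof (cases "max i (a * N) \<le> h \<and> h \<le> i + a * N")
  case False
  then show ?thesis by (auto simp: sc_def)
next
  case True
  then obtain k where h: "h = a * N + k" and "k \<le> i"
    by (metis add.commute add_le_imp_le_left le_add_diff_inverse max.bounded_iff)
  with \<open>i < N\<close> have "k < N" by simp
  have "(of_nat (h choose i) :: 'a) = of_nat (k choose i)"
    using of_nat_binomial_digit_split[OF char N \<open>k < N\<close> \<open>i < N\<close>, where d = a and a = 0] h
    by simp
  moreover have "(of_nat (h choose (a * N)) :: 'a) = 1"
    using of_nat_binomial_digit_split[OF char N \<open>k < N\<close>, where c = 0 and d = a and a = a]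
      h \<open>k < N\<close> by simp
  ultimately show ?thesis
    using h \<open>k \<le> i\<close> by (auto simp: sc_def binomial_eq_0)
qed

lemma smult_vadd: "smult m l2 x (vadd y z) = vadd (smult m l2 x y) (smult m l2 x z)"
  unfolding Defs.smult_def vadd_def by (auto simp: algebra_simps sum.distrib)

lemma smult_vsmul: "smult m l2 x (vsmul c y) = vsmul c (smult m l2 x y)"
  unfolding Defs.smult_def vsmul_def by (auto simp: algebra_simps sum_distrib_left)

lemma smult_b_block_multiple:
  assumes char: "prime CHAR('a::field)" and N: "N = CHAR('a) ^ s"
    and x: "\<And>i. N \<le> i \<Longrightarrow> x i = (0::'a)"
  shows "smult m l2 x (b l2 (a * N)) h = (if h \<le> l2 \<and> a * N \<le> h then x (h - a * N) else 0)"
proof (cases "h \<le> l2 \<and> a * N \<le> l2")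
  case False
  then show ?thesis by (auto simp: Defs.smult_def bas_def)
next
  case True
  have "smult m l2 x (b l2 (a * N)) h = (\<Sum>i\<le>l2. x i * sc m i (a * N) h)"
    using True
    by (simp add: Defs.smult_def bas_def if_distrib[of "\<lambda>y. _ * y"] if_distrib[of "\<lambda>y. y * _"]
        sum.delta cong: if_cong)
  also have "\<dots> = (\<Sum>i\<le>l2. if i = h - a * N \<and> a * N \<le> h then x i else 0)"
  proof (rule sum.cong[OF refl])
    fix i
    show "x i * sc m i (a * N) h = (if i = h - a * N \<and> a * N \<le> h then x i else 0)"
      by (cases "i < N") (auto simp: sc_block_multiple[OF char N] x)
  qed
  also have "\<dots> = (if a * N \<le> h then x (h - a * N) else 0)"
    using True by (auto simp: sum.delta)
  finally show ?thesis using True by simp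
qed

lemma psi_apply:
  "psi l2 m u h = (if 1 \<le> h \<and> h < 3 ^ u \<and> h \<le> l2 then of_nat (trunc3 m u choose (3 ^ u - h)) else 0)"
proof -
  have "psi l2 m u h = (\<Sum>k\<in>{1..3 ^ u - 1}.
      if k = h \<and> h \<le> l2 then of_nat (trunc3 m u choose (3 ^ u - h)) else 0)"
    unfolding psi_def bas_def by (rule sum.cong) auto
  then show ?thesis by (auto simp: sum.delta intro!: sum.neutral)
qed

lemma smult_psi_b_block_multiple:
  assumes "CHAR('a::field) = 3"
  shows "smult m l2 (psi l2 m u :: nat \<Rightarrow> 'a) (b l2 (a * 3 ^ u)) h =
    (if h \<le> l2 \<and> a * 3 ^ u \<le> h then psi l2 m u (h - a * 3 ^ u) else 0)"
  by (rule smult_b_block_multiple) (use assms in \<open>simp_all add: psi_apply\<close>)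

lemma nat_block_decomposition:
  fixes h q N :: nat
  assumes "0 < h" and "h < q * N"
  obtains j k where "j < q" and "1 \<le> k" and "k \<le> N" and "h = j * N + k"
proof -
  have "(h - 1) div N < q"
    using assms by (intro less_mult_imp_div_less) linarith
  moreover have "0 < N"
    using assms by (cases N) auto
  moreover have "h = (h - 1) div N * N + ((h - 1) mod N + 1)"
    using assms(1) by simp
  ultimately show ?thesis
    using that[of "(h - 1) div N" "(h - 1) mod N + 1"] by (simp add: Suc_le_eq)
qed

lemma trunc3_Suc: "trunc3 m (Suc u) = digit3 m u * 3 ^ u + trunc3 m u"
  unfolding trunc3_def digit3_def power_Suc2 mod_mult2_eq by simp

lemma psi_Suc_block:
  assumes "CHAR('a::field) = 3" and "j < 3" and "1 \<le> k" and "k \<le> 3 ^ u"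
    and "j * 3 ^ u + k < 3 ^ Suc u" and "j * 3 ^ u + k \<le> l2"
  shows "(psi l2 m (Suc u) (j * 3 ^ u + k) :: 'a) =
    of_nat (digit3 m u choose (2 - j)) * of_nat (trunc3 m u choose (3 ^ u - k))"
proof -
  have "3 ^ Suc u - (j * 3 ^ u + k) = (2 - j) * 3 ^ u + (3 ^ u - k)"
    using assms(2-4) by (auto simp: algebra_simps numeral_eq_Suc less_Suc_eq)
  moreover have "trunc3 m u < 3 ^ u" "3 ^ u - k < (3::nat) ^ u"
    using assms(3) by (simp_all add: trunc3_def)
  ultimately show ?thesis
    using assms(1,3,5,6) of_nat_binomial_digit_split[where 'a = 'a and s = u and N = "3 ^ u"]
    by (simp add: psi_apply trunc3_Suc del: power_Suc)
qed

theorem mainTheorem6: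
  fixes l1 l2 t :: nat
  assumes "CHAR('a::field) = 3"
    and "l2 \<le> l1"
    and "1 \<le> t"
  defines "m \<equiv> l1 - l2"
  defines "d \<equiv> digit3 (l1 - l2) (t - 1)"
  shows "(psi l2 m t :: nat \<Rightarrow> 'a) =
    vadd (vadd
      (smult m l2 (psi l2 m (t - 1))
         (vadd (vadd (vsmul (of_nat (d choose 2)) (b l2 0))
                     (vsmul (of_nat (d choose 1)) (b l2 (3 ^ (t - 1)))))
               (vsmul (of_nat (d choose 0)) (b l2 (2 * 3 ^ (t - 1))))))
      (vsmul (of_nat (d choose 2)) (b l2 (3 ^ (t - 1)))))
      (vsmul (of_nat (d choose 1)) (b l2 (2 * 3 ^ (t - 1))))"
proof -
  obtain u where t: "t = Suc u" using assms(3) by (cases t) auto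
  define N where "N = (3::nat) ^ u"
  note shifts = smult_psi_b_block_multiple[OF assms(1), where u = u, folded N_def]
  have N: "3 ^ Suc u = 3 * N" "1 \<le> N" by (simp_all add: N_def)
  show ?thesis
    unfolding t diff_Suc_1 N_def[symmetric] smult_vadd smult_vsmul
    unfolding vadd_def vsmul_def shifts[where a = 0, simplified] shifts[where a = 1, simplified]
      shifts[where a = 2]
  proof (rule ext, goal_cases)
    case (1 h)
    show ?case
    proof (cases "h = 0 \<or> l2 < h \<or> 3 * N \<le> h")
      case True
      then show ?thesis using N by (auto simp: bas_def psi_apply)
    next
      case False
      then have "0 < h" "h < 3 * N" by auto
      then obtain j k where block: "j < 3" "1 \<le> k" "k \<le> N" "h = j * N + k"
        by (rule nat_block_decomposition)
      have "d = digit3 m u" by (simp add: d_def m_def t)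
      then have lhs: "(psi l2 m (Suc u) h :: 'a) =
          of_nat (d choose (2 - j)) * of_nat (trunc3 m u choose (N - k))"
        using psi_Suc_block[OF assms(1), of j k u l2 m] block False N by (simp add: N_def)
      from \<open>j < 3\<close> consider "j = 0" | "j = 1" | "j = 2" by linarith
      then show ?thesis
        unfolding lhs by cases (use block False N in \<open>auto simp: bas_def psi_apply\<close>)
    qed
  qed
qed

end
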